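(* Let $E$ be a finite-dimensional real affine space and let $G(E)$ be the set of generalized affine functions on $E$, equipped with the topology of pointwise convergence. Then $G(E)$ is a compact Hausdorff space.
   Context: A generalized affine function on $E$ is a function $E\to\overline{\mathbb{R}}=\mathbb{R}\cup\{\pm\infty\}$ that is both convex and concave (extended-real-valued sense). The topology of pointwise convergence is the subspace topology from the product topology on $\overline{\mathbb{R}}^{E}$, with $\overline{\mathbb{R}}$ carrying its usual order topology. *)

theory Defs
  imports "HOL-Analysis.Analysis" "HOL-Library.Extended_Real"
begin

text \<open>Convexity / concavity of an extended-real-valued function, via convexity
of the epigraph / hypograph in E \<times> R (Rockafellar's convention).\<close>

definition ext_convex :: "('a::real_vector \<Rightarrow> ereal) \<Rightarrow> bool" where
  "ext_convex f \<longleftrightarrow> convex {(x, t::real). f x \<le> ereal t}"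

definition ext_concave :: "('a::real_vector \<Rightarrow> ereal) \<Rightarrow> bool" where
  "ext_concave f \<longleftrightarrow> convex {(x, t::real). ereal t \<le> f x}"

definition gen_affine :: "('a::real_vector \<Rightarrow> ereal) set" where
  "gen_affine = {f. ext_convex f \<and> ext_concave f}"

definition gen_affine_topology :: "('a::real_vector \<Rightarrow> ereal) topology" where
  "gen_affine_topology = subtopology (product_topology (\<lambda>_. euclidean) UNIV) gen_affine"

end

theory Submission
  imports Defs
begin

text \<open>Convexity of an extended-real function constrains only three values at a time, and a
violation of it is witnessed by strict inequalities between those values and real numbers,
which persist under small pointwise perturbations. Hence the functions that are not convex form an
open set of the product topology; concavity reduces to convexity of the negation. So the generalized
affine functions form a closed subset of the compact Hausdorff space \<open>ereal\<^sup>E\<close>.\<close>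

lemma ext_convex_iff:
  "ext_convex f \<longleftrightarrow> (\<forall>x y s t u v. u \<ge> 0 \<longrightarrow> v \<ge> 0 \<longrightarrow> u + v = 1 \<longrightarrow>
      f x < ereal s \<longrightarrow> f y < ereal t \<longrightarrow> f (u *\<^sub>R x + v *\<^sub>R y) \<le> ereal (u * s + v * t))"
  (is "_ \<longleftrightarrow> ?R")
proof
  assume convex: "ext_convex f"
  show ?R
  proof (intro allI impI)
    fix x y s t u v
    assume "(u::real) \<ge> 0" "v \<ge> 0" "u + v = 1" "f x < ereal s" "f y < ereal t"
    then have "u *\<^sub>R (x, s) + v *\<^sub>R (y, t) \<in> {(x, t::real). f x \<le> ereal t}"
      using convex unfolding ext_convex_def by (intro convexD) auto
    then show "f (u *\<^sub>R x + v *\<^sub>R y) \<le> ereal (u * s + v * t)"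
      by simp
  qed
next
  assume strict: ?R
  show "ext_convex f" unfolding ext_convex_def convex_def
  proof (intro ballI allI impI)
    fix p q :: "'a \<times> real" and u v :: real
    assume "p \<in> {(x, t). f x \<le> ereal t}" "q \<in> {(x, t). f x \<le> ereal t}"
      and uv: "0 \<le> u" "0 \<le> v" "u + v = 1"
    then obtain x s y t where pq: "p = (x, s)" "q = (y, t)"
      and fx: "f x \<le> ereal s" and fy: "f y \<le> ereal t"
      by (cases p, cases q) auto
    have "f (u *\<^sub>R x + v *\<^sub>R y) \<le> ereal (u * s + v * t)"
    proof (rule ereal_le_epsilon2)
      fix e :: real assume "0 < e"
      then have "f x < ereal (s + e)" "f y < ereal (t + e)"
        using fx fy by (auto elim: le_less_trans)
      then have "f (u *\<^sub>R x + v *\<^sub>R y) \<le> ereal (u * (s + e) + v * (t + e))"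
        using strict uv by blast
      also have "u * (s + e) + v * (t + e) = u * s + v * t + e"
        using uv by (simp add: algebra_simps flip: distrib_left)
      finally show "f (u *\<^sub>R x + v *\<^sub>R y) \<le> ereal (u * s + v * t) + ereal e"
        by simp
    qed
    then show "u *\<^sub>R p + v *\<^sub>R q \<in> {(x, t). f x \<le> ereal t}"
      using pq by simp
  qed
qed

lemma ext_concave_iff_ext_convex_uminus: "ext_concave f \<longleftrightarrow> ext_convex (\<lambda>x. - f x)"
proof -
  define m :: "'a \<times> real \<Rightarrow> 'a \<times> real" where "m = (\<lambda>(x, t). (x, - t))"
  have "linear m"
    unfolding m_def by (intro linearI) auto
  have "m -` {(x, t). - f x \<le> ereal t} = {(x, t). ereal t \<le> f x}"
    and "m -` {(x, t). ereal t \<le> f x} = {(x, t). - f x \<le> ereal t}"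
    unfolding m_def by (auto simp: ereal_uminus_le_reorder)
  then show ?thesis
    unfolding ext_concave_def ext_convex_def
    using convex_linear_vimage[OF \<open>linear m\<close>] by metis
qed

abbreviation pointwise_topology :: "('a \<Rightarrow> ereal) topology" where
  "pointwise_topology \<equiv> product_topology (\<lambda>_. euclidean) UNIV"

lemma openin_pointwise_less: "openin pointwise_topology {g. g z < c}"
proof -
  have "openin pointwise_topology {g \<in> topspace pointwise_topology. g z \<in> {..<c}}"
    by (rule openin_continuous_map_preimage[OF continuous_map_product_projection]) auto
  then show ?thesis by simp
qed

lemma openin_pointwise_greater: "openin pointwise_topology {g. c < g z}"
proof -
  have "openin pointwise_topology {g \<in> topspace pointwise_topology. g z \<in> {c<..}}"
    by (rule openin_continuous_map_preimage[OF continuous_map_product_projection]) auto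
  then show ?thesis by simp
qed

lemma openin_not_ext_convex: "openin pointwise_topology {f :: 'a::real_vector \<Rightarrow> ereal. \<not> ext_convex f}"
  unfolding openin_subopen[of _ "{f. \<not> ext_convex f}"]
proof
  fix f :: "'a \<Rightarrow> ereal"
  assume "f \<in> {f. \<not> ext_convex f}"
  then obtain x y s t u v where uv: "u \<ge> 0" "v \<ge> 0" "u + v = 1"
    and f: "f x < ereal s" "f y < ereal t" "\<not> f (u *\<^sub>R x + v *\<^sub>R y) \<le> ereal (u * s + v * t)"
    unfolding ext_convex_iff by blast
  define T where "T = {g. g x < ereal s} \<inter> {g. g y < ereal t}
    \<inter> {g. ereal (u * s + v * t) < g (u *\<^sub>R x + v *\<^sub>R y)}"
  have "openin pointwise_topology T"
    unfolding T_def by (intro openin_Int openin_pointwise_less openin_pointwise_greater)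
  moreover have "f \<in> T"
    using f unfolding T_def by (simp add: not_le)
  moreover have "T \<subseteq> {f. \<not> ext_convex f}"
  proof (clarify)
    fix g assume "g \<in> T" "ext_convex g"
    then have "g (u *\<^sub>R x + v *\<^sub>R y) \<le> ereal (u * s + v * t)"
      using uv unfolding T_def ext_convex_iff by blast
    with \<open>g \<in> T\<close> show False
      unfolding T_def by (simp add: not_le[symmetric])
  qed
  ultimately show "\<exists>T. openin pointwise_topology T \<and> f \<in> T \<and> T \<subseteq> {f. \<not> ext_convex f}"
    by blast
qed

lemma closedin_ext_convex: "closedin pointwise_topology {f :: 'a::real_vector \<Rightarrow> ereal. ext_convex f}"
  using openin_not_ext_convex by (simp add: closedin_def Collect_neg_eq Compl_eq_Diff_UNIV)

lemma continuous_map_pointwise_uminus: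
  "continuous_map pointwise_topology pointwise_topology (\<lambda>f x. - f x)"
proof -
  have uminus: "continuous_map euclidean euclidean (uminus :: ereal \<Rightarrow> ereal)"
    using continuous_uminus_ereal by simp
  have "continuous_map pointwise_topology euclidean (\<lambda>f. - f x)" for x
    using continuous_map_compose[OF continuous_map_product_projection[of x UNIV "\<lambda>_. euclidean"] uminus]
    by (simp add: o_def)
  then show ?thesis
    unfolding continuous_map_componentwise_UNIV by blast
qed

lemma closedin_ext_concave: "closedin pointwise_topology {f :: 'a::real_vector \<Rightarrow> ereal. ext_concave f}"
  using closedin_continuous_map_preimage[OF continuous_map_pointwise_uminus closedin_ext_convex]
  by (simp add: ext_concave_iff_ext_convex_uminus)

lemma closedin_gen_affine: "closedin pointwise_topology gen_affine"
  unfolding gen_affine_def Collect_conj_eq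
  by (intro closedin_Int closedin_ext_convex closedin_ext_concave)

lemma Hausdorff_space_euclidean_t2: "Hausdorff_space (euclidean :: 'a::t2_space topology)"
  unfolding Hausdorff_space_def by (metis hausdorff open_openin disjnt_def)

theorem theorem2:
  assumes "\<exists>B :: 'a::real_vector set. finite B \<and> span B = UNIV"
  shows "compact_space (gen_affine_topology :: ('a \<Rightarrow> ereal) topology)
     \<and> Hausdorff_space (gen_affine_topology :: ('a \<Rightarrow> ereal) topology)"
proof
  have "compact_space (euclidean :: ereal topology)"
    by (simp add: compact_space_def compact_UNIV)
  then have "compact_space (pointwise_topology :: ('a \<Rightarrow> ereal) topology)"
    using compact_space_product_topology by blast
  then have "compactin pointwise_topology (gen_affine :: ('a \<Rightarrow> ereal) set)"
    using closedin_compact_space closedin_gen_affine by blast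
  then show "compact_space (gen_affine_topology :: ('a \<Rightarrow> ereal) topology)"
    unfolding gen_affine_topology_def by (rule compact_space_subtopology)
  show "Hausdorff_space (gen_affine_topology :: ('a \<Rightarrow> ereal) topology)"
    unfolding gen_affine_topology_def
    by (intro Hausdorff_space_subtopology Hausdorff_space_product_topology[THEN iffD2] disjI2 ballI
        Hausdorff_space_euclidean_t2)
qed

end
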